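(* Let $\alpha\in\mathbb C$. For every integer $n\ge1$, $$A_\alpha^n=\sum_{i=0}^{\lfloor (n-1)/2\rfloor}\binom{n}{i}P_{n-2i,\alpha}+\varphi_n I,$$ where $\varphi_n=0$ if $n$ is odd and $\varphi_n=\binom{n}{n/2}$ if $n$ is even. All matrices are semi-infinite with rows and columns indexed by the positive integers; $I$ is the semi-infinite identity and $e_1$ its first column. $T(a)$ denotes the Toeplitz matrix with $(i,j)$ entry $a_{j-i}$ for $a(z)=\sum_{i\in\mathbb Z}a_iz^i$. For a vector/power series $v(z)=\sum_{i\ge1}v_iz^i$, $H(v)$ denotes the semi-infinite Hankel matrix with $(i,j)$ entry $v_{i+j-1}$ (its first column is $(v_1,v_2,\ldots)^T$). $A_\alpha:=T(z+z^{-1})+\alpha e_1e_1^T$ (tridiagonal, ones on sub- and superdiagonal, $(1,1)$ entry $\alpha$). Let $\theta=\alpha^2-1$, $h_1(z)=\alpha z$, and $h_n(z)=\theta\sum_{i=1}^{n-1}\alpha^{n-i-1}z^i+\alpha z^n$ for $n\ge2$. Define $H_{n,\alpha}=H(h_n)$, $P_{0,\alpha}=I$ and $P_{n,\alpha}=T(z^n+z^{-n})+H_{n,\alpha}$ for $n\ge1$ (so $P_{1,\alpha}=A_\alpha$). *)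

theory Defs
  imports "HOL-Analysis.Analysis"
begin

text \<open>Semi-infinite matrices, rows/columns indexed by positive integers
  (entries at index 0 are irrelevant and ignored).\<close>
type_synonym smat = "nat \<Rightarrow> nat \<Rightarrow> complex"

definition sid :: smat where
  "sid = (\<lambda>i j. if i = j then 1 else 0)"

definition smul :: "smat \<Rightarrow> smat \<Rightarrow> smat" where
  "smul A B = (\<lambda>i j. infsum (\<lambda>k. A i k * B k j) {1..})"

fun spow :: "smat \<Rightarrow> nat \<Rightarrow> smat" where
  "spow A 0 = sid"
| "spow A (Suc n) = smul A (spow A n)"

definition toeplitz :: "(int \<Rightarrow> complex) \<Rightarrow> smat" where
  "toeplitz a = (\<lambda>i j. a (int j - int i))"

definition hankel :: "(nat \<Rightarrow> complex) \<Rightarrow> smat" where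
  "hankel v = (\<lambda>i j. v (i + j - 1))"

definition A_mat :: "complex \<Rightarrow> smat" where
  "A_mat \<alpha> = (\<lambda>i j. toeplitz (\<lambda>k. if k = 1 \<or> k = -1 then 1 else 0) i j
                      + \<alpha> * (if i = 1 \<and> j = 1 then 1 else 0))"

definition h_coeff :: "complex \<Rightarrow> nat \<Rightarrow> nat \<Rightarrow> complex" where
  "h_coeff \<alpha> n k =
     (if 1 \<le> k \<and> k \<le> n - 1 then (\<alpha>\<^sup>2 - 1) * \<alpha> ^ (n - k - 1) else 0)
     + (if k = n then \<alpha> else 0)"

definition P_mat :: "nat \<Rightarrow> complex \<Rightarrow> smat" where
  "P_mat n \<alpha> = (if n = 0 then sid else
     (\<lambda>i j. toeplitz (\<lambda>k. if k = int n \<or> k = - int n then 1 else 0) i j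
            + hankel (h_coeff \<alpha> n) i j))"

end

theory Submission
  imports Defs
begin

text \<open>For every integer m let Q_m = T(z^m + z^-m) + H(h_|m|); thus Q_0 = 2I and Q_m = Q_-m = P_m
  for m \<ge> 1. These matrices satisfy the Chebyshev recurrence A Q_m = Q_(m+1) + Q_(m-1): below the
  first row it is the three-term recurrence of the Toeplitz parts and of the coefficients of h_m,
  and in the first row the Hankel part exactly absorbs the corner entry \<alpha>. Hence 2 A^n expands
  like (z + z^-1)^n, as the sum of C(n,k) Q_(n-2k) over k \<le> n, and pairing the terms k and n - k
  gives the theorem.\<close>

lemma h_coeff_0: "h_coeff \<alpha> 0 k = (if k = 0 then \<alpha> else 0)"
  by (auto simp: h_coeff_def)

lemma h_coeff_step:
  assumes "m \<ge> 1" "k \<ge> 2"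
  shows "h_coeff \<alpha> m (k - 1) + h_coeff \<alpha> m (k + 1) = h_coeff \<alpha> (m + 1) k + h_coeff \<alpha> (m - 1) k"
proof (cases "k + 2 \<le> m")
  case True
  then obtain d where m: "m = k + 2 + d" using le_Suc_ex by blast
  obtain t where k: "k = t + 2" using assms(2) le_Suc_ex by (metis add.commute)
  show ?thesis unfolding h_coeff_def m k
    by (simp add: power_add power2_eq_square algebra_simps Suc_diff_le)
next
  case False
  then show ?thesis using assms by (auto simp: h_coeff_def)
qed

text \<open>The indicator terms are what the Toeplitz parts of Q_m leave over in the first row.\<close>

lemma h_coeff_first_row:
  assumes "m \<ge> 2" "k \<ge> 1"
  shows "\<alpha> * h_coeff \<alpha> m k + h_coeff \<alpha> m (k + 1) + (if k = m + 1 then \<alpha> else 0)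
       = h_coeff \<alpha> (m + 1) k + h_coeff \<alpha> (m - 1) k + (if k = m then 1 else 0)"
proof (cases "k + 2 \<le> m")
  case True
  then obtain d where m: "m = k + 2 + d" using le_Suc_ex by blast
  show ?thesis using assms(2) unfolding h_coeff_def m
    by (simp add: power_add power2_eq_square algebra_simps Suc_diff_le)
next
  case False
  then show ?thesis using assms by (auto simp: h_coeff_def power2_eq_square algebra_simps)
qed

definition Q_mat :: "complex \<Rightarrow> int \<Rightarrow> smat" where
  "Q_mat \<alpha> m = (\<lambda>i j. toeplitz (\<lambda>k. (if k = m then 1 else 0) + (if k = - m then 1 else 0)) i j
                        + hankel (h_coeff \<alpha> (nat \<bar>m\<bar>)) i j)"

lemma Q_mat_entry:
  "Q_mat \<alpha> m i j = (if int j = int i + m then 1 else 0) + (if int i = int j + m then 1 else 0)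
                     + h_coeff \<alpha> (nat \<bar>m\<bar>) (i + j - 1)"
  unfolding Q_mat_def toeplitz_def hankel_def by (auto simp: algebra_simps)

lemma Q_mat_uminus: "Q_mat \<alpha> (- m) = Q_mat \<alpha> m"
  unfolding Q_mat_def by (simp add: add.commute)

lemma Q_mat_eq_P_mat: "m \<ge> 1 \<Longrightarrow> Q_mat \<alpha> (int m) = P_mat m \<alpha>"
  unfolding Q_mat_def P_mat_def toeplitz_def by (intro ext) auto

lemma Q_mat_diff_eq_P_mat: "2 * l < n \<Longrightarrow> Q_mat \<alpha> (int n - 2 * int l) = P_mat (n - 2 * l) \<alpha>"
  using Q_mat_eq_P_mat[of "n - 2 * l" \<alpha>] by (simp add: of_nat_diff)

lemma Q_mat_0: "i \<ge> 1 \<Longrightarrow> j \<ge> 1 \<Longrightarrow> Q_mat \<alpha> 0 i j = 2 * sid i j"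
  by (simp add: Q_mat_entry sid_def h_coeff_0)

lemma smul_A_mat:
  assumes "i \<ge> 1"
  shows "smul (A_mat \<alpha>) B i j = (if i = 1 then \<alpha> * B 1 j else B (i - 1) j) + B (i + 1) j"
proof -
  have A: "A_mat \<alpha> r k = (if k = r + 1 \<or> r = k + 1 then 1 else 0) + (if r = 1 \<and> k = 1 then \<alpha> else 0)" for r k
    unfolding A_mat_def toeplitz_def by auto
  have "smul (A_mat \<alpha>) B i j = (\<Sum>\<^sub>\<infinity>k \<in> {max 1 (i - 1), i + 1}. A_mat \<alpha> i k * B k j)"
    unfolding smul_def by (rule infsum_cong_neutral) (use assms in \<open>auto simp: A\<close>)
  then show ?thesis using assms by (cases "i = 1") (simp_all add: A)
qed

lemma A_mat_mult_Q_mat_ge_2: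
  assumes "m \<ge> 2" "i \<ge> 1" "j \<ge> 1"
  shows "smul (A_mat \<alpha>) (Q_mat \<alpha> (int m)) i j = Q_mat \<alpha> (int m + 1) i j + Q_mat \<alpha> (int m - 1) i j"
proof -
  have idx: "nat (int m - 1) = m - 1" "nat (1 + int m) = m + 1"
    using assms(1) by auto
  show ?thesis
  proof (cases "i = 1")
    case True
    then show ?thesis using h_coeff_first_row[OF assms(1,3), of \<alpha>] assms
      by (auto simp: smul_A_mat Q_mat_entry idx algebra_simps)
  next
    case False
    then have "i + j - 1 \<ge> 2" using assms by auto
    from h_coeff_step[OF _ this, of m \<alpha>] False assms show ?thesis
      by (auto simp: smul_A_mat Q_mat_entry idx algebra_simps)
  qed
qed

lemma A_mat_mult_Q_mat_nonneg:
  assumes "i \<ge> 1" "j \<ge> 1"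
  shows "smul (A_mat \<alpha>) (Q_mat \<alpha> (int m)) i j = Q_mat \<alpha> (int m + 1) i j + Q_mat \<alpha> (int m - 1) i j"
proof -
  consider "m = 0" | "m = 1" | "m \<ge> 2" by linarith
  then show ?thesis
  proof cases
    case 1
    then show ?thesis using assms by (auto simp: smul_A_mat Q_mat_entry h_coeff_def)
  next
    case 2
    then show ?thesis using assms by (auto simp: smul_A_mat Q_mat_entry h_coeff_def power2_eq_square)
  next
    case 3
    then show ?thesis using A_mat_mult_Q_mat_ge_2 assms by simp
  qed
qed

lemma A_mat_mult_Q_mat:
  assumes "i \<ge> 1" "j \<ge> 1"
  shows "smul (A_mat \<alpha>) (Q_mat \<alpha> m) i j = Q_mat \<alpha> (m + 1) i j + Q_mat \<alpha> (m - 1) i j"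
proof (cases "m \<ge> 0")
  case True
  then show ?thesis using A_mat_mult_Q_mat_nonneg[OF assms, of \<alpha> "nat m"] by simp
next
  case False
  then have "smul (A_mat \<alpha>) (Q_mat \<alpha> m) i j = smul (A_mat \<alpha>) (Q_mat \<alpha> (int (nat (- m)))) i j"
    using Q_mat_uminus[of \<alpha> m] by simp
  also have "\<dots> = Q_mat \<alpha> (- (m - 1)) i j + Q_mat \<alpha> (- (m + 1)) i j"
  proof -
    have "int (nat (- m)) + 1 = - (m - 1)" "int (nat (- m)) - 1 = - (m + 1)"
      using False by simp_all
    then show ?thesis using A_mat_mult_Q_mat_nonneg[OF assms, of \<alpha> "nat (- m)"] by (simp only:)
  qed
  finally show ?thesis by (simp only: Q_mat_uminus add.commute)
qed

lemma sum_choose_Suc_laurent: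
  fixes f :: "int \<Rightarrow> 'a :: comm_semiring_1"
  shows "(\<Sum>k\<le>Suc n. of_nat (Suc n choose k) * f (int (Suc n) - 2 * int k))
       = (\<Sum>k\<le>n. of_nat (n choose k) * (f (int n - 2 * int k + 1) + f (int n - 2 * int k - 1)))"
proof -
  define g where "g k = f (int (Suc n) - 2 * int k)" for k
  have "(\<Sum>k\<le>Suc n. of_nat (Suc n choose k) * g k)
      = (g 0 + (\<Sum>k\<le>n. of_nat (n choose Suc k) * g (Suc k))) + (\<Sum>k\<le>n. of_nat (n choose k) * g (Suc k))"
    by (simp only: sum.atMost_Suc_shift binomial_Suc_Suc of_nat_add distrib_right sum.distrib)
      (simp add: add_ac)
  also have "g 0 + (\<Sum>k\<le>n. of_nat (n choose Suc k) * g (Suc k)) = (\<Sum>k\<le>Suc n. of_nat (n choose k) * g k)"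
    by (subst sum.atMost_Suc_shift) simp
  also have "\<dots> = (\<Sum>k\<le>n. of_nat (n choose k) * g k)"
    by (simp add: binomial_eq_0)
  also have "(\<Sum>k\<le>n. of_nat (n choose k) * g k) + (\<Sum>k\<le>n. of_nat (n choose k) * g (Suc k))
      = (\<Sum>k\<le>n. of_nat (n choose k) * (f (int n - 2 * int k + 1) + f (int n - 2 * int k - 1)))"
    unfolding g_def distrib_left sum.distrib by (simp add: algebra_simps)
  finally show ?thesis unfolding g_def .
qed

lemma two_spow_A_mat_eq_sum_Q_mat:
  assumes "i \<ge> 1" "j \<ge> 1"
  shows "2 * spow (A_mat \<alpha>) n i j = (\<Sum>k\<le>n. of_nat (n choose k) * Q_mat \<alpha> (int n - 2 * int k) i j)"
  using assms
proof (induction n arbitrary: i j)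
  case 0
  then show ?case by (simp add: Q_mat_0)
next
  case (Suc n)
  define S where "S r = (\<Sum>k\<le>n. of_nat (n choose k) * Q_mat \<alpha> (int n - 2 * int k) r j)" for r
  have "2 * spow (A_mat \<alpha>) (Suc n) i j
      = (if i = 1 then \<alpha> * (2 * spow (A_mat \<alpha>) n 1 j) else 2 * spow (A_mat \<alpha>) n (i - 1) j)
        + 2 * spow (A_mat \<alpha>) n (i + 1) j"
    using Suc.prems by (simp add: smul_A_mat algebra_simps)
  also have "\<dots> = (if i = 1 then \<alpha> * S 1 else S (i - 1)) + S (i + 1)"
    using Suc.IH Suc.prems unfolding S_def by auto
  also have "\<dots> = (\<Sum>k\<le>n. of_nat (n choose k) * smul (A_mat \<alpha>) (Q_mat \<alpha> (int n - 2 * int k)) i j)"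
    unfolding S_def smul_A_mat[OF Suc.prems(1)]
    by (cases "i = 1") (simp_all add: sum_distrib_left sum.distrib algebra_simps)
  also have "\<dots> = (\<Sum>k\<le>n. of_nat (n choose k)
                       * (Q_mat \<alpha> (int n - 2 * int k + 1) i j + Q_mat \<alpha> (int n - 2 * int k - 1) i j))"
    using A_mat_mult_Q_mat[OF Suc.prems] by simp
  also have "\<dots> = (\<Sum>k\<le>Suc n. of_nat (Suc n choose k) * Q_mat \<alpha> (int (Suc n) - 2 * int k) i j)"
    by (rule sum_choose_Suc_laurent[symmetric])
  finally show ?case .
qed

lemma sum_atMost_fold:
  fixes g :: "nat \<Rightarrow> 'a :: comm_monoid_add"
  assumes "n \<ge> 1"
  shows "(\<Sum>k\<le>n. g k) = (\<Sum>l = 0..(n - 1) div 2. g l + g (n - l)) + (if even n then g (n div 2) else 0)"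
proof -
  define p where "p = (n - 1) div 2"
  define c where "c = (if even n then 1 else 0 :: nat)"
  have n: "n = p + c + Suc p"
    using assms unfolding p_def c_def even_iff_mod_2_eq_zero by presburger
  have "(\<Sum>k\<le>n. g k) = (\<Sum>k\<le>p. g k) + (\<Sum>k = Suc p..p + (c + Suc p). g k)"
    unfolding n add.assoc by (rule sum_up_index_split)
  also have "(\<Sum>k = Suc p..p + (c + Suc p). g k) = (\<Sum>k = Suc p..<Suc p + c. g k) + (\<Sum>k = Suc p + c..p + (c + Suc p). g k)"
    unfolding atLeastLessThanSuc_atLeastAtMost[symmetric] by (rule sum.atLeastLessThan_concat[symmetric]) auto
  also have "(\<Sum>k = Suc p + c..p + (c + Suc p). g k) = (\<Sum>l = 0..p. g (n - l))"
  proof -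
    have "(\<Sum>k = Suc p + c..p + (c + Suc p). g k) = (\<Sum>l = 0..p. g (l + (Suc p + c)))"
      using sum.shift_bounds_cl_nat_ivl[of g 0 "Suc p + c" p] by (simp add: add_ac)
    also have "\<dots> = (\<Sum>l = 0..p. g (p - l + (Suc p + c)))"
      by (rule sum.atLeastAtMost_rev[where n = 0, simplified])
    also have "\<dots> = (\<Sum>l = 0..p. g (n - l))"
      by (rule sum.cong) (auto simp: n intro!: arg_cong[where f = g])
    finally show ?thesis .
  qed
  also have "(\<Sum>k = Suc p..<Suc p + c. g k) = (if even n then g (n div 2) else 0)"
    using n unfolding c_def by auto
  finally show ?thesis unfolding p_def[symmetric] by (simp add: atLeast0AtMost sum.distrib add_ac)
qed

theorem corollary4:
  fixes \<alpha> :: complex and n :: nat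
  assumes "n \<ge> 1"
  shows "\<forall>i\<ge>1. \<forall>j\<ge>1. spow (A_mat \<alpha>) n i j =
           (\<Sum>l = 0..(n - 1) div 2. of_nat (n choose l) * P_mat (n - 2 * l) \<alpha> i j)
           + (if even n then of_nat (n choose (n div 2)) else 0) * sid i j"
proof (intro allI impI)
  fix i j :: nat
  assume ij: "i \<ge> 1" "j \<ge> 1"
  define g where "g k = of_nat (n choose k) * Q_mat \<alpha> (int n - 2 * int k) i j" for k
  have pair: "g l + g (n - l) = 2 * (of_nat (n choose l) * P_mat (n - 2 * l) \<alpha> i j)"
    if "l \<in> {0..(n - 1) div 2}" for l
  proof -
    from that assms have l: "2 * l < n" by auto
    then have reflect: "int n - 2 * int (n - l) = - (int n - 2 * int l)" "n choose (n - l) = n choose l"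
      by (simp_all add: of_nat_diff binomial_symmetric[symmetric])
    show ?thesis unfolding g_def reflect Q_mat_uminus Q_mat_diff_eq_P_mat[OF l] by simp
  qed
  have middle: "even n \<Longrightarrow> g (n div 2) = 2 * (of_nat (n choose (n div 2)) * sid i j)"
    using ij by (auto simp: g_def Q_mat_0 elim!: evenE)
  have "2 * spow (A_mat \<alpha>) n i j = (\<Sum>k\<le>n. g k)"
    unfolding g_def by (rule two_spow_A_mat_eq_sum_Q_mat[OF ij])
  also have "\<dots> = 2 * ((\<Sum>l = 0..(n - 1) div 2. of_nat (n choose l) * P_mat (n - 2 * l) \<alpha> i j)
           + (if even n then of_nat (n choose (n div 2)) else 0) * sid i j)"
    unfolding sum_atMost_fold[OF assms] using pair middle
    by (simp add: sum_distrib_left distrib_left)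
  finally show "spow (A_mat \<alpha>) n i j = (\<Sum>l = 0..(n - 1) div 2. of_nat (n choose l) * P_mat (n - 2 * l) \<alpha> i j)
           + (if even n then of_nat (n choose (n div 2)) else 0) * sid i j"
    by (subst (asm) mult_cancel_left) simp
qed

end
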